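(* Let $\chi_3(n)=\left(\frac{n}{3}\right)$ be the Legendre symbol modulo $3$ and let $\tilde\chi_3$ be either of its two modified characters (i.e. $\tilde\chi_3(3)=+1$ or $\tilde\chi_3(3)=-1$). Then for every integer $k\ge1$ and every $n\in\mathbb{N}\cup\{0\}$, $$\#\{1\le m\le k:\ \tilde\chi_3(n+m)=-1\}\ \ge\ \frac12\Big(k-\Big\lfloor\frac{\log k}{\log 3}\Big\rfloor-2\Big).$$ Consequently $\delta(k)\ge \tfrac12 k+O(\log k)$.
   Context: For a real Dirichlet character $\chi_q$ modulo $q>1$, a modified character $\tilde\chi_q$ is the completely multiplicative function $\mathbb{N}\to\{+1,-1\}$ with $\tilde\chi_q(p)=\chi_q(p)$ for primes $p\nmid q$ and $\tilde\chi_q(p)=\eta(p)\in\{+1,-1\}$ (an arbitrary sign) for primes $p\mid q$. Here $\delta(k)$ denotes the supremum, over all $q>1$, all real characters $\chi_q$ mod $q$ and all sign choices $\eta$, of $\min_{n\ge0}\#\{1\le m\le k:\tilde\chi_q(n+m)=-1\}$. *)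

theory Defs
  imports "HOL-Number_Theory.Number_Theory"
begin

definition real_char :: "nat \<Rightarrow> (nat \<Rightarrow> int) \<Rightarrow> bool" where
  "real_char q \<chi> \<longleftrightarrow>
     (\<forall>n. \<chi> (n + q) = \<chi> n) \<and>
     (\<forall>m n. \<chi> (m * n) = \<chi> m * \<chi> n) \<and>
     (\<forall>n. \<chi> n = 0 \<longleftrightarrow> \<not> coprime n q) \<and>
     (\<forall>n. \<chi> n \<in> {-1, 0, 1})"

text \<open>Modified character: completely multiplicative with value \<chi> p at primes p not dividing q
  and \<eta> p at primes p dividing q (only meaningful for n \<ge> 1).\<close>
definition modified_char :: "nat \<Rightarrow> (nat \<Rightarrow> int) \<Rightarrow> (nat \<Rightarrow> int) \<Rightarrow> nat \<Rightarrow> int" where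
  "modified_char q \<chi> \<eta> n =
     (\<Prod>p\<in>prime_factors n. (if p dvd q then \<eta> p else \<chi> p) ^ multiplicity p n)"

definition neg_count :: "(nat \<Rightarrow> int) \<Rightarrow> nat \<Rightarrow> nat \<Rightarrow> nat" where
  "neg_count f n k = card {m \<in> {1..k}. f (n + m) = -1}"

definition delta :: "nat \<Rightarrow> nat" where
  "delta k = Sup {Min (range (\<lambda>n. neg_count (modified_char q \<chi> \<eta>) n k)) | q \<chi> \<eta>.
       q > 1 \<and> real_char q \<chi> \<and> (\<forall>p. prime p \<and> p dvd q \<longrightarrow> \<eta> p \<in> {-1, 1})}"

end

theory Submission
  imports Defs
begin

text \<open>Write \<open>F\<close> for the modified character. For \<open>3 \<nmid> m\<close> one has \<open>F m = \<chi>\<^sub>3 m\<close>, and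
  \<open>F (3t) = \<plusminus>F t\<close>. Hence a sum of \<open>F\<close> over \<open>k\<close> consecutive integers is a sum of \<open>\<chi>\<^sub>3\<close>
  (which is at most \<open>1\<close> in absolute value) plus \<open>\<plusminus>\<close> a sum of \<open>F\<close> over at most \<open>\<lceil>k/3\<rceil>\<close>
  consecutive integers. Iterating, the sum is at most \<open>\<lfloor>log\<^sub>3 k\<rfloor> + 2\<close> in absolute value,
  and since \<open>F = \<plusminus>1\<close> it equals \<open>k\<close> minus twice the number of \<open>m\<close> with \<open>F m = -1\<close>.\<close>

definition chi3 :: "nat \<Rightarrow> int" where
  "chi3 m = (if m mod 3 = 1 then 1 else if m mod 3 = 2 then -1 else 0)"

lemma chi3_mult: "chi3 (a * b) = chi3 a * chi3 b"
proof -
  have "a mod 3 \<in> {0, 1, 2}" "b mod 3 \<in> {0, 1, 2}" by auto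
  moreover have "(a * b) mod 3 = ((a mod 3) * (b mod 3)) mod 3" by (simp add: mod_mult_eq)
  ultimately show ?thesis unfolding chi3_def by auto
qed

lemma Legendre_3_eq_chi3: "Legendre (int m) 3 = chi3 m"
proof -
  have square_mod_3: "y\<^sup>2 mod 3 \<in> {0, 1}" for y :: int
  proof -
    have "y mod 3 \<in> {0, 1, 2}" by auto
    then show ?thesis by (auto simp: power_mod[of y 3 2, symmetric])
  qed
  have QuadRes_iff: "QuadRes 3 (int m) \<longleftrightarrow> m mod 3 \<in> {0, 1}"
  proof
    assume "QuadRes 3 (int m)"
    then obtain y where "y\<^sup>2 mod 3 = int (m mod 3)" by (auto simp: QuadRes_def cong_def zmod_int)
    then show "m mod 3 \<in> {0, 1}" using square_mod_3[of y] by auto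
  next
    assume "m mod 3 \<in> {0, 1}"
    then have "(m mod 3)\<^sup>2 = m mod 3" by auto
    then have "[(m mod 3)\<^sup>2 = m] (mod 3)" by (simp add: cong_def)
    then have "[(int (m mod 3))\<^sup>2 = int m] (mod 3)"
      by (metis cong_int_iff of_nat_power of_nat_numeral)
    then show "QuadRes 3 (int m)" unfolding QuadRes_def by blast
  qed
  have cong_0_iff: "[int m = 0] (mod 3) \<longleftrightarrow> m mod 3 = 0"
    using cong_int_iff[of m 0 3] by (simp add: cong_def)
  have "m mod 3 \<in> {0, 1, 2}" by auto
  then show ?thesis
    by (auto simp: Legendre_def chi3_def QuadRes_iff cong_0_iff)
qed

lemma real_char_Legendre_3: "real_char 3 (\<lambda>m. Legendre (int m) 3)"
  unfolding real_char_def Legendre_3_eq_chi3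
proof (intro conjI allI)
  fix n :: nat
  have "coprime n 3 \<longleftrightarrow> \<not> 3 dvd n"
    using prime_imp_coprime[of "3::nat" n] coprime_common_divisor[of n 3 3]
    by (auto simp: coprime_commute)
  then show "chi3 n = 0 \<longleftrightarrow> \<not> coprime n 3"
    by (simp add: chi3_def dvd_eq_mod_eq_0)
  show "chi3 (n + 3) = chi3 n" "chi3 n \<in> {-1, 0, 1}"
    by (simp_all add: chi3_def)
qed (rule chi3_mult)

lemma sum_chi3_atMost: "(\<Sum>m\<le>N. chi3 m) = (if N mod 3 = 1 then 1 else 0)"
proof (induction N)
  case (Suc N)
  have "N mod 3 \<in> {0, 1, 2}" by auto
  moreover have "Suc N mod 3 = (if N mod 3 = 2 then 0 else Suc (N mod 3))" by (simp add: mod_Suc)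
  ultimately show ?case using Suc by (auto simp: chi3_def)
qed (simp add: chi3_def)

lemma abs_sum_chi3_interval_le_1: "\<bar>\<Sum>m\<in>{n<..n + k}. chi3 m\<bar> \<le> 1"
proof -
  have "{..n} \<inter> {n<..n + k} = {}" by auto
  from sum.union_disjoint[OF finite_atMost finite_greaterThanAtMost this]
  have "(\<Sum>m\<le>n + k. chi3 m) = (\<Sum>m\<le>n. chi3 m) + (\<Sum>m\<in>{n<..n + k}. chi3 m)"
    by (simp add: ivl_disj_un_one(3))
  moreover have bounds: "0 \<le> (\<Sum>m\<le>N. chi3 m) \<and> (\<Sum>m\<le>N. chi3 m) \<le> 1" for N
    by (simp add: sum_chi3_atMost)
  ultimately show ?thesis
    using bounds[of n] bounds[of "n + k"] unfolding abs_le_iff by linarith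
qed

lemma modified_char_eq_prod_mset:
  "modified_char q \<chi> \<eta> n =
     prod_mset (image_mset (\<lambda>p. if p dvd q then \<eta> p else \<chi> p) (prime_factorization n))"
  unfolding modified_char_def image_prod_mset_multiplicity
  by (intro prod.cong refl) (simp add: count_prime_factorization_prime in_prime_factors_imp_prime)

lemma modified_char_mult:
  "a \<noteq> 0 \<Longrightarrow> b \<noteq> 0 \<Longrightarrow>
     modified_char q \<chi> \<eta> (a * b) = modified_char q \<chi> \<eta> a * modified_char q \<chi> \<eta> b"
  by (simp add: modified_char_eq_prod_mset prime_factorization_mult)

lemma modified_char_prime:
  "prime p \<Longrightarrow> modified_char q \<chi> \<eta> p = (if p dvd q then \<eta> p else \<chi> p)"
  by (simp add: modified_char_eq_prod_mset prime_factorization_prime)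

lemma real_char_mult: "real_char q \<chi> \<Longrightarrow> \<chi> (m * n) = \<chi> m * \<chi> n"
  unfolding real_char_def by blast

lemma real_char_1:
  assumes "real_char q \<chi>"
  shows "\<chi> 1 = 1"
proof -
  have "\<chi> 1 \<noteq> 0" using assms unfolding real_char_def by (meson coprime_1_left)
  moreover have "\<chi> 1 = \<chi> 1 * \<chi> 1" using real_char_mult[OF assms, of 1 1] by simp
  ultimately show ?thesis by simp
qed

lemma real_char_prod_mset:
  assumes "real_char q \<chi>"
  shows "\<chi> (prod_mset M) = prod_mset (image_mset \<chi> M)"
proof (induction M)
  case empty
  show ?case using real_char_1[OF assms] by simp
next
  case (add x M)
  then show ?case by (simp add: real_char_mult[OF assms])
qed

lemma real_char_in_plus_minus_one_if_coprime:
  assumes "real_char q \<chi>" "coprime n q"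
  shows "\<chi> n \<in> {-1, 1}"
proof -
  from assms(1) have "\<chi> n \<in> {-1, 0, 1}" "\<chi> n = 0 \<longleftrightarrow> \<not> coprime n q"
    unfolding real_char_def by blast+
  with assms(2) show ?thesis by auto
qed

lemma modified_char_eq_real_char_if_coprime:
  assumes "real_char q \<chi>" "coprime n q" "n > 0"
  shows "modified_char q \<chi> \<eta> n = \<chi> n"
proof -
  have factors_eq: "image_mset (\<lambda>p. if p dvd q then \<eta> p else \<chi> p) (prime_factorization n)
      = image_mset \<chi> (prime_factorization n)"
  proof (rule image_mset_cong)
    fix p assume "p \<in># prime_factorization n"
    then have "prime p" "p dvd n" by (auto simp: in_prime_factors_iff)
    with \<open>coprime n q\<close> have "\<not> p dvd q"
      by (meson coprime_common_divisor not_prime_unit)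
    then show "(if p dvd q then \<eta> p else \<chi> p) = \<chi> p" by simp
  qed
  have "\<chi> n = \<chi> (prod_mset (prime_factorization n))"
    using \<open>n > 0\<close> by (simp add: prod_mset_prime_factorization)
  also have "\<dots> = prod_mset (image_mset \<chi> (prime_factorization n))"
    by (rule real_char_prod_mset[OF assms(1)])
  finally show ?thesis by (simp add: modified_char_eq_prod_mset factors_eq)
qed

lemma prod_mset_in_plus_minus_one:
  "(\<And>x. x \<in># M \<Longrightarrow> x \<in> {-1, 1::int}) \<Longrightarrow> prod_mset M \<in> {-1, 1}"
proof (induction M)
  case (add x M)
  then have "x \<in> {-1, 1}" "prod_mset M \<in> {-1, 1}" by simp_all
  then show ?case by auto
qed simp

lemma modified_char_in_plus_minus_one:
  assumes "real_char q \<chi>" "\<And>p. prime p \<Longrightarrow> p dvd q \<Longrightarrow> \<eta> p \<in> {-1, 1}"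
  shows "modified_char q \<chi> \<eta> n \<in> {-1, 1}"
  unfolding modified_char_eq_prod_mset
proof (rule prod_mset_in_plus_minus_one)
  fix x assume "x \<in># image_mset (\<lambda>p. if p dvd q then \<eta> p else \<chi> p) (prime_factorization n)"
  then obtain p where p: "prime p" "x = (if p dvd q then \<eta> p else \<chi> p)"
    by (auto simp: in_prime_factors_iff)
  show "x \<in> {-1, 1}"
  proof (cases "p dvd q")
    case True
    then show ?thesis using p assms(2) by simp
  next
    case False
    then have "coprime p q" using p(1) by (simp add: prime_imp_coprime)
    then show ?thesis using p False real_char_in_plus_minus_one_if_coprime[OF assms(1)] by simp
  qed
qed

lemma neg_count_le: "neg_count f n k \<le> k"
proof -
  have "neg_count f n k \<le> card {1..k}" unfolding neg_count_def by (rule card_mono) auto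
  then show ?thesis by simp
qed

lemma sum_interval_eq_minus_twice_neg_count:
  assumes "\<And>m. m \<in> {n<..n + k} \<Longrightarrow> f m \<in> {-1, 1}"
  shows "(\<Sum>m\<in>{n<..n + k}. f m) = int k - 2 * int (neg_count f n k)"
proof -
  define A where "A = {m \<in> {1..k}. f (n + m) = -1}"
  have A_sub: "A \<subseteq> {1..k}" by (auto simp: A_def)
  have "{n<..n + k} = {1 + n..k + n}" by auto
  then have "(\<Sum>m\<in>{n<..n + k}. f m) = (\<Sum>m\<in>{1..k}. f (m + n))"
    by (simp only: sum.shift_bounds_cl_nat_ivl)
  also have "\<dots> = (\<Sum>m\<in>{1..k}. if m \<in> A then -1 else 1)"
  proof (intro sum.cong refl)
    fix m assume "m \<in> {1..k}"
    moreover from this have "f (m + n) \<in> {-1, 1}" using assms by auto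
    ultimately show "f (m + n) = (if m \<in> A then -1 else 1)" by (auto simp: A_def add.commute)
  qed
  also have "\<dots> = int (card ({1..k} - A)) - int (card A)"
    using A_sub by (simp add: sum.If_cases Diff_eq Int_absorb1)
  also have "\<dots> = int k - 2 * int (card A)"
    using A_sub card_Diff_subset[OF finite_subset[OF A_sub]] card_mono[OF _ A_sub] by simp
  finally show ?thesis by (simp add: neg_count_def A_def)
qed

lemma exists_neg_count_le_delta:
  assumes "q > 1" "real_char q \<chi>" "\<And>p. prime p \<Longrightarrow> p dvd q \<Longrightarrow> \<eta> p \<in> {-1, 1}"
  shows "\<exists>n. neg_count (modified_char q \<chi> \<eta>) n k \<le> delta k"
proof -
  define X where "X = {Min (range (\<lambda>n. neg_count (modified_char q \<chi> \<eta>) n k)) | q \<chi> \<eta>.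
       q > 1 \<and> real_char q \<chi> \<and> (\<forall>p. prime p \<and> p dvd q \<longrightarrow> \<eta> p \<in> {-1, 1})}"
  have finite_range: "finite (range (\<lambda>n. neg_count f n k))" for f
    by (rule finite_subset[of _ "{..k}"]) (use neg_count_le in auto)
  have Min_le_k: "Min (range (\<lambda>n. neg_count f n k)) \<le> k" for f
    using Min_le[OF finite_range[of f], of "neg_count f 0 k"] neg_count_le[of f 0 k] by simp
  have "bdd_above X"
    unfolding X_def by (rule bdd_aboveI[of _ k]) (use Min_le_k in blast)
  moreover have "Min (range (\<lambda>n. neg_count (modified_char q \<chi> \<eta>) n k)) \<in> X"
    unfolding X_def using assms by blast
  ultimately have "Min (range (\<lambda>n. neg_count (modified_char q \<chi> \<eta>) n k)) \<le> delta k"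
    unfolding delta_def X_def[symmetric] by (rule cSup_upper[rotated])
  moreover obtain n where
    "neg_count (modified_char q \<chi> \<eta>) n k = Min (range (\<lambda>n. neg_count (modified_char q \<chi> \<eta>) n k))"
    using Min_in[OF finite_range[of "modified_char q \<chi> \<eta>"]] by auto
  ultimately show ?thesis by metis
qed

lemma multiples_in_interval:
  fixes d :: nat
  assumes "d > 0"
  shows "{m \<in> {a<..b}. d dvd m} = (*) d ` {a div d<..b div d}"
proof -
  have key: "t \<in> {a div d<..b div d} \<longleftrightarrow> d * t \<in> {a<..b}" for t
    using less_eq_div_iff_mult_less_eq[OF assms, of t a] less_eq_div_iff_mult_less_eq[OF assms, of t b]
    by (simp add: mult.commute not_le[symmetric])
  show ?thesis
  proof (rule Set.set_eqI, rule iffI)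
    fix m assume "m \<in> {m \<in> {a<..b}. d dvd m}"
    then obtain t where "m = d * t" "d * t \<in> {a<..b}" by (auto elim!: dvdE)
    then show "m \<in> (*) d ` {a div d<..b div d}" using key by blast
  next
    fix m assume "m \<in> (*) d ` {a div d<..b div d}"
    then obtain t where "m = d * t" "t \<in> {a div d<..b div d}" by blast
    then show "m \<in> {m \<in> {a<..b}. d dvd m}" using key by simp
  qed
qed

abbreviation chi3_tilde :: "int \<Rightarrow> nat \<Rightarrow> int" where
  "chi3_tilde e \<equiv> modified_char 3 (\<lambda>m. Legendre (int m) 3) (\<lambda>_. e)"

lemma chi3_tilde_not_dvd: "\<not> 3 dvd m \<Longrightarrow> m > 0 \<Longrightarrow> chi3_tilde e m = chi3 m"
  using modified_char_eq_real_char_if_coprime[OF real_char_Legendre_3]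
    prime_imp_coprime[of "3::nat" m]
  by (simp add: coprime_commute Legendre_3_eq_chi3)

lemma chi3_tilde_times_3: "t > 0 \<Longrightarrow> chi3_tilde e (3 * t) = e * chi3_tilde e t"
  by (simp add: modified_char_mult modified_char_prime)

lemma chi3_tilde_in_plus_minus_one: "e \<in> {-1, 1} \<Longrightarrow> chi3_tilde e m \<in> {-1, 1}"
  by (rule modified_char_in_plus_minus_one[OF real_char_Legendre_3]) simp

lemma sum_chi3_tilde_interval:
  "(\<Sum>m\<in>{n<..n + k}. chi3_tilde e m) =
     (\<Sum>m\<in>{n<..n + k}. chi3 m) + e * (\<Sum>t\<in>{n div 3<..(n + k) div 3}. chi3_tilde e t)"
proof -
  have decomp: "chi3_tilde e m = chi3 m + (if 3 dvd m then chi3_tilde e m else 0)" if "m > 0" for m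
  proof (cases "3 dvd m")
    case True
    then show ?thesis by (simp add: chi3_def dvd_eq_mod_eq_0)
  next
    case False
    then show ?thesis using chi3_tilde_not_dvd[OF False that] by simp
  qed
  have "(\<Sum>m\<in>{n<..n + k}. chi3_tilde e m) =
      (\<Sum>m\<in>{n<..n + k}. chi3 m + (if 3 dvd m then chi3_tilde e m else 0))"
    by (intro sum.cong refl decomp) auto
  also have "\<dots> =
      (\<Sum>m\<in>{n<..n + k}. chi3 m) + (\<Sum>m\<in>{m \<in> {n<..n + k}. 3 dvd m}. chi3_tilde e m)"
    by (simp only: sum.distrib sum.inter_filter[OF finite_greaterThanAtMost])
  also have "(\<Sum>m\<in>{m \<in> {n<..n + k}. 3 dvd m}. chi3_tilde e m) =
      (\<Sum>t\<in>{n div 3<..(n + k) div 3}. chi3_tilde e (3 * t))"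
    unfolding multiples_in_interval[of 3, OF zero_less_numeral]
    by (rule sum.reindex_cong[of "(*) 3"]) (auto simp: inj_on_def)
  also have "\<dots> = e * (\<Sum>t\<in>{n div 3<..(n + k) div 3}. chi3_tilde e t)"
    by (simp add: sum_distrib_left chi3_tilde_times_3)
  finally show ?thesis .
qed

lemma abs_sum_chi3_tilde_interval_le:
  assumes "e \<in> {-1, 1}" "k \<le> 3 ^ a"
  shows "\<bar>\<Sum>m\<in>{n<..n + k}. chi3_tilde e m\<bar> \<le> int a + 1"
  using assms(2)
proof (induction a arbitrary: n k)
  case 0
  have abs_eq_1: "\<bar>chi3_tilde e m\<bar> = 1" for m
    using chi3_tilde_in_plus_minus_one[OF assms(1), of m] by auto
  have "\<bar>\<Sum>m\<in>{n<..n + k}. chi3_tilde e m\<bar> \<le> (\<Sum>m\<in>{n<..n + k}. \<bar>chi3_tilde e m\<bar>)"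
    by (rule sum_abs)
  also have "\<dots> = int k" by (simp add: abs_eq_1)
  finally show ?case using "0" by simp
next
  case (Suc a)
  define k' where "k' = (n + k) div 3 - n div 3"
  have upper: "(n + k) div 3 = n div 3 + k'"
    unfolding k'_def by (simp add: div_le_mono)
  have "(n + k) div 3 \<le> (n + 3 * 3 ^ a) div 3"
    using Suc.prems by (intro div_le_mono) simp
  then have "k' \<le> 3 ^ a" using upper by simp
  then have IH: "\<bar>\<Sum>t\<in>{n div 3<..(n + k) div 3}. chi3_tilde e t\<bar> \<le> int a + 1"
    using Suc.IH[of k' "n div 3"] upper by simp
  have "\<bar>e * (\<Sum>t\<in>{n div 3<..(n + k) div 3}. chi3_tilde e t)\<bar>
      = \<bar>\<Sum>t\<in>{n div 3<..(n + k) div 3}. chi3_tilde e t\<bar>"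
    using assms(1) by (auto simp: abs_mult)
  moreover have "\<bar>\<Sum>m\<in>{n<..n + k}. chi3_tilde e m\<bar> \<le>
      \<bar>\<Sum>m\<in>{n<..n + k}. chi3 m\<bar> + \<bar>e * (\<Sum>t\<in>{n div 3<..(n + k) div 3}. chi3_tilde e t)\<bar>"
    unfolding sum_chi3_tilde_interval by (rule abs_triangle_ineq)
  ultimately show ?case
    using abs_sum_chi3_interval_le_1[of n k] IH by simp
qed

lemma neg_count_chi3_tilde_ge:
  assumes "e \<in> {-1, 1}" "k \<ge> 1"
  shows "real (neg_count (chi3_tilde e) n k) \<ge> (real k - real_of_int \<lfloor>ln (real k) / ln 3\<rfloor> - 2) / 2"
proof -
  define J where "J = nat \<lfloor>log 3 (real k)\<rfloor>"
  define N where "N = neg_count (chi3_tilde e) n k"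
  have "0 \<le> log 3 (real k)" using assms(2) by simp
  then have floor_eq: "\<lfloor>log 3 (real k)\<rfloor> = int J" unfolding J_def by simp
  have "3 ^ J \<le> k \<and> k < 3 ^ (J + 1)"
    by (rule floor_log_nat_eq_powr_iff[of 3 k J, THEN iffD1]) (use assms(2) floor_eq in auto)
  then have "\<bar>\<Sum>m\<in>{n<..n + k}. chi3_tilde e m\<bar> \<le> int (J + 1) + 1"
    by (intro abs_sum_chi3_tilde_interval_le[OF assms(1)]) simp
  moreover have "(\<Sum>m\<in>{n<..n + k}. chi3_tilde e m) = int k - 2 * int N"
    unfolding N_def
    by (rule sum_interval_eq_minus_twice_neg_count) (rule chi3_tilde_in_plus_minus_one[OF assms(1)])
  ultimately have "int k - 2 * int N \<le> int J + 2" by simp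
  then have "real k - 2 * real N \<le> real J + 2" by linarith
  moreover have "\<lfloor>ln (real k) / ln 3\<rfloor> = int J" using floor_eq by (simp add: log_def)
  ultimately show ?thesis unfolding N_def by simp
qed

lemma delta_ge:
  assumes "k \<ge> 2"
  shows "real k / 2 - (1 / (2 * ln 3) + 1 / ln 2) * ln (real k) \<le> real (delta k)"
proof -
  obtain n where n: "neg_count (chi3_tilde 1) n k \<le> delta k"
    using exists_neg_count_le_delta[OF _ real_char_Legendre_3, of "\<lambda>_. 1" k] by auto
  have "1 \<le> ln (real k) / ln 2" using assms by simp
  moreover have "real_of_int \<lfloor>ln (real k) / ln 3\<rfloor> \<le> ln (real k) / ln 3" by simp
  ultimately have "real k - ln (real k) / ln 3 - 2 * (ln (real k) / ln 2)
      \<le> real k - real_of_int \<lfloor>ln (real k) / ln 3\<rfloor> - 2"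
    by linarith
  moreover have "real k / 2 - (1 / (2 * ln 3) + 1 / ln 2) * ln (real k)
      = (real k - ln (real k) / ln 3 - 2 * (ln (real k) / ln 2)) / 2"
    by (simp add: field_simps)
  ultimately have "real k / 2 - (1 / (2 * ln 3) + 1 / ln 2) * ln (real k)
      \<le> (real k - real_of_int \<lfloor>ln (real k) / ln 3\<rfloor> - 2) / 2"
    by (simp add: divide_right_mono)
  also have "\<dots> \<le> real (neg_count (chi3_tilde 1) n k)"
    using assms by (intro neg_count_chi3_tilde_ge) auto
  also have "\<dots> \<le> real (delta k)" using n by simp
  finally show ?thesis .
qed

theorem mainTheorem3:
  shows "(\<forall>e::int \<in> {-1, 1}. \<forall>k::nat \<ge> 1. \<forall>n::nat.
            real (neg_count (modified_char 3 (\<lambda>m. Legendre (int m) 3) (\<lambda>_. e)) n k)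
              \<ge> (real k - real_of_int \<lfloor>ln (real k) / ln 3\<rfloor> - 2) / 2)
         \<and> (\<exists>C::real. \<forall>k::nat \<ge> 2. real (delta k) \<ge> real k / 2 - C * ln (real k))"
  using neg_count_chi3_tilde_ge delta_ge by blast

end
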